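(* Let $S$ be an inverse semigroup that is a separately Scott-continuous mirror semigroup, with semilattice of idempotents $\Sigma$. Then for all $\epsilon,\delta\in\Sigma$, $\epsilon \prec\!\!\!\prec \delta$ if and only if $\epsilon\ll\delta$.
   Context: An inverse semigroup is a semigroup $S$ in which every $s$ has a unique $s^*$ with $ss^*s=s$ and $s^*ss^*=s^*$. $\Sigma=\Sigma(S)$ is the set of idempotents. The intrinsic order is $s\leqslant t$ iff $s=t\epsilon$ for some idempotent $\epsilon$. A subset is directed if nonempty and any two elements have an upper bound in it. $S$ is a mirror semigroup if every directed subset of $\Sigma$ having a supremum in $(\Sigma,\leqslant)$ also has a supremum in $(S,\leqslant)$. $S$ is separately Scott-continuous if for every directed $D\subseteq S$ with a supremum $\bigvee D$ in $S$ and every $s\in S$, $\bigvee(Ds)$ exists in $S$ and equals $(\bigvee D)s$. In a poset, $x$ is way-below $y$ if for every directed subset $D$ that has a supremum with $y\leqslant \sup D$, there is $d\in D$ with $x\leqslant d$. $\ll$ denotes the way-below relation of the poset $(S,\leqslant)$ and $\prec\!\!\!\prec$ the way-below relation of the poset $(\Sigma,\leqslant)$. *)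

theory Defs
  imports Main
begin

definition inverse_semigroup :: "'a::semigroup_mult itself \<Rightarrow> bool" where
  "inverse_semigroup _ \<longleftrightarrow> (\<forall>s::'a. \<exists>!t. s * t * s = s \<and> t * s * t = t)"

definition idems :: "'a::semigroup_mult set" where
  "idems = {e. e * e = e}"

definition nat_le :: "'a::semigroup_mult \<Rightarrow> 'a \<Rightarrow> bool" where
  "nat_le s t \<longleftrightarrow> (\<exists>e\<in>idems. s = t * e)"

definition is_ub :: "('a \<Rightarrow> 'a \<Rightarrow> bool) \<Rightarrow> 'a set \<Rightarrow> 'a set \<Rightarrow> 'a \<Rightarrow> bool" where
  "is_ub le P D u \<longleftrightarrow> u \<in> P \<and> (\<forall>d\<in>D. le d u)"

definition is_sup :: "('a \<Rightarrow> 'a \<Rightarrow> bool) \<Rightarrow> 'a set \<Rightarrow> 'a set \<Rightarrow> 'a \<Rightarrow> bool" where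
  "is_sup le P D x \<longleftrightarrow> is_ub le P D x \<and> (\<forall>u. is_ub le P D u \<longrightarrow> le x u)"

definition directed :: "('a \<Rightarrow> 'a \<Rightarrow> bool) \<Rightarrow> 'a set \<Rightarrow> bool" where
  "directed le D \<longleftrightarrow> D \<noteq> {} \<and> (\<forall>a\<in>D. \<forall>b\<in>D. \<exists>c\<in>D. le a c \<and> le b c)"

definition way_below :: "('a \<Rightarrow> 'a \<Rightarrow> bool) \<Rightarrow> 'a set \<Rightarrow> 'a \<Rightarrow> 'a \<Rightarrow> bool" where
  "way_below le P x y \<longleftrightarrow>
     (\<forall>D s. D \<subseteq> P \<and> directed le D \<and> is_sup le P D s \<and> le y s \<longrightarrow> (\<exists>d\<in>D. le x d))"

definition mirror_semigroup :: "'a::semigroup_mult itself \<Rightarrow> bool" where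
  "mirror_semigroup _ \<longleftrightarrow>
     (\<forall>D::'a set. D \<subseteq> idems \<and> directed nat_le D \<and> (\<exists>x. is_sup nat_le idems D x)
        \<longrightarrow> (\<exists>y. is_sup nat_le UNIV D y))"

definition sep_scott_continuous :: "'a::semigroup_mult itself \<Rightarrow> bool" where
  "sep_scott_continuous _ \<longleftrightarrow>
     (\<forall>(D::'a set) x s. directed nat_le D \<and> is_sup nat_le UNIV D x
        \<longrightarrow> is_sup nat_le UNIV ((\<lambda>d. d * s) ` D) (x * s))"

end

theory Submission
  imports Defs
begin

text \<open>
  If \<open>D \<subseteq> \<Sigma>\<close> has a supremum in \<open>\<Sigma>\<close>, the mirror property gives a supremum in \<open>S\<close>;
  it lies below an idempotent, hence is idempotent, so the two suprema agree and
  \<open>\<epsilon> \<ll> \<delta>\<close> implies \<open>\<epsilon> \<prec>\<prec> \<delta>\<close>. Conversely, if \<open>\<delta> \<le> \<Or>D\<close> for a directed \<open>D \<subseteq> S\<close>, then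
  \<open>D\<delta>\<close> is a directed set of idempotents (each \<open>x\<delta> \<le> (\<Or>D)\<delta> = \<delta>\<close>) whose supremum is
  \<open>(\<Or>D)\<delta> = \<delta>\<close> by separate Scott continuity; so \<open>\<epsilon> \<le> x\<delta> \<le> x\<close> for some \<open>x \<in> D\<close>.
\<close>

lemma is_sup_subset:
  assumes "is_sup le P D x" "x \<in> Q" "Q \<subseteq> P"
  shows "is_sup le Q D x"
  using assms unfolding is_sup_def is_ub_def by auto

lemma directed_image_mono:
  assumes "directed le D" "\<And>x y. x \<in> D \<Longrightarrow> y \<in> D \<Longrightarrow> le x y \<Longrightarrow> le (f x) (f y)"
  shows "directed le (f ` D)"
  using assms unfolding directed_def by (simp add: image_iff) blast

definition sinv :: "'a::semigroup_mult \<Rightarrow> 'a" where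
  "sinv s = (THE t. s * t * s = s \<and> t * s * t = t)"

locale inverse_semigroup_type =
  fixes T :: "'a::semigroup_mult itself"
  assumes inverse_semigroup: "inverse_semigroup T"
begin

lemma ex1_inverse: "\<exists>!t. (s::'a) * t * s = s \<and> t * s * t = t"
  using inverse_semigroup unfolding inverse_semigroup_def by blast

lemma sinv: "(s::'a) * sinv s * s = s" "sinv s * s * sinv s = sinv s"
  using theI'[OF ex1_inverse[of s]] unfolding sinv_def by auto

lemma sinv_unique: "(s::'a) * t * s = s \<Longrightarrow> t * s * t = t \<Longrightarrow> t = sinv s"
  using ex1_inverse[of s] sinv[of s] by blast

lemma sinv_sinv [simp]: "sinv (sinv (s::'a)) = s"
  using sinv_unique[of "sinv s" s] sinv[of s] by simp

lemma sinv_idem: "(e::'a) \<in> idems \<Longrightarrow> sinv e = e"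
  unfolding idems_def using sinv_unique[of e e] by (simp add: mult.assoc)

lemma sinv_mult_idem: "sinv (s::'a) * s \<in> idems"
  unfolding idems_def using sinv(1)[of s] by (simp add: mult.assoc)

lemma mult_sinv_idem: "(s::'a) * sinv s \<in> idems"
  unfolding idems_def using sinv(2)[of s] by (simp add: mult.assoc)

lemma idem_left_absorb: "(e::'a) \<in> idems \<Longrightarrow> e * (e * z) = e * z"
  unfolding idems_def by (simp flip: mult.assoc)

text \<open>The inverse \<open>x\<close> of \<open>ef\<close> satisfies \<open>x = fxe\<close>, since \<open>fxe\<close> is an inverse of \<open>ef\<close> too;
  this makes \<open>x\<close> idempotent, hence \<open>ef = sinv x = x\<close>.\<close>
lemma idems_mult_closed:
  assumes e: "(e::'a) \<in> idems" and f: "f \<in> idems"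
  shows "e * f \<in> idems"
proof -
  define x where "x = sinv (e * f)"
  have x1: "e * f * x * (e * f) = e * f" and x2: "x * (e * f) * x = x"
    using sinv[of "e * f"] unfolding x_def by auto
  have "(e * f) * (f * x * e) * (e * f) = e * f * x * (e * f)"
    "(f * x * e) * (e * f) * (f * x * e) = f * (x * (e * f) * x) * e"
    using idem_left_absorb[OF e] idem_left_absorb[OF f] by (simp_all add: mult.assoc)
  then have fxe: "f * x * e = x"
    using sinv_unique[of "e * f" "f * x * e"] x1 x2 unfolding x_def by simp
  have "(f * x * e) * (f * x * e) = f * (x * (e * f) * x) * e"
    by (simp add: mult.assoc)
  then have "x * x = x"
    using fxe x2 by simp
  then have "e * f = x"
    using sinv_idem[of x] sinv_sinv[of "e * f"] unfolding x_def idems_def by simp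
  with \<open>x * x = x\<close> show ?thesis
    unfolding idems_def by simp
qed

lemma idems_commute:
  assumes e: "(e::'a) \<in> idems" and f: "f \<in> idems"
  shows "e * f = f * e"
proof -
  have ef: "e * f * (e * f) = e * f" and fe: "f * e * (f * e) = f * e"
    using idems_mult_closed[OF e f] idems_mult_closed[OF f e] unfolding idems_def by auto
  have "(e * f) * (f * e) * (e * f) = e * f" "(f * e) * (e * f) * (f * e) = f * e"
    using idem_left_absorb[OF e] idem_left_absorb[OF f] ef fe by (simp_all add: mult.assoc)
  then have "f * e = sinv (e * f)"
    by (rule sinv_unique)
  then show ?thesis
    using sinv_idem[OF idems_mult_closed[OF e f]] by simp
qed

lemma sinv_mult: "sinv ((a::'a) * b) = sinv b * sinv a"
proof -
  have c: "(b * sinv b) * (sinv a * a) = (sinv a * a) * (b * sinv b)"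
    using idems_commute[OF mult_sinv_idem sinv_mult_idem] .
  have "(a * b) * (sinv b * sinv a) * (a * b) = a * ((b * sinv b) * (sinv a * a)) * b"
    by (simp add: mult.assoc)
  also have "\<dots> = a * ((sinv a * a) * (b * sinv b)) * b"
    using c by simp
  also have "\<dots> = (a * sinv a * a) * (b * sinv b * b)"
    by (simp add: mult.assoc)
  finally have p: "(a * b) * (sinv b * sinv a) * (a * b) = a * b"
    using sinv by simp
  have "(sinv b * sinv a) * (a * b) * (sinv b * sinv a) = sinv b * ((sinv a * a) * (b * sinv b)) * sinv a"
    by (simp add: mult.assoc)
  also have "\<dots> = sinv b * ((b * sinv b) * (sinv a * a)) * sinv a"
    using c by simp
  also have "\<dots> = (sinv b * b * sinv b) * (sinv a * a * sinv a)"
    by (simp add: mult.assoc)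
  finally have "(sinv b * sinv a) * (a * b) * (sinv b * sinv a) = sinv b * sinv a"
    using sinv by simp
  with p show ?thesis
    by (rule sinv_unique[symmetric])
qed

lemma nat_le_refl: "nat_le (s::'a) s"
  unfolding nat_le_def using sinv_mult_idem sinv(1)[of s]
  by (intro bexI[of _ "sinv s * s"]) (simp_all add: mult.assoc)

lemma nat_le_trans: "nat_le (s::'a) t \<Longrightarrow> nat_le t u \<Longrightarrow> nat_le s u"
  unfolding nat_le_def using idems_mult_closed by (auto simp: mult.assoc)

lemma nat_le_antisym:
  assumes "nat_le (s::'a) t" "nat_le t s"
  shows "s = t"
proof -
  obtain e f where e: "e \<in> idems" "s = t * e" and f: "f \<in> idems" "t = s * f"
    using assms unfolding nat_le_def by auto
  have "s * e = s"
    using e unfolding idems_def by (simp add: mult.assoc)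
  have "t * e = s * (f * e)"
    using f by (simp add: mult.assoc)
  also have "\<dots> = s * e * f"
    using idems_commute[OF e(1) f(1)] by (simp add: mult.assoc)
  also have "\<dots> = t"
    using \<open>s * e = s\<close> f by simp
  finally show ?thesis
    using e by simp
qed

lemma nat_le_idems: "nat_le (x::'a) e \<Longrightarrow> e \<in> idems \<Longrightarrow> x \<in> idems"
  unfolding nat_le_def using idems_mult_closed by auto

lemma nat_le_mult_idem: "(e::'a) \<in> idems \<Longrightarrow> nat_le (s * e) s"
  unfolding nat_le_def by blast

lemma nat_le_imp_eq_mult_domain:
  assumes "nat_le (x::'a) t"
  shows "x = t * (sinv x * x)"
proof -
  obtain g where g: "g \<in> idems" "x = t * g"
    using assms unfolding nat_le_def by auto
  have "sinv x * x = g * (sinv t * t) * g"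
    using g sinv_mult sinv_idem by (simp add: mult.assoc)
  also have "\<dots> = sinv t * t * g * g"
    using idems_commute[OF g(1) sinv_mult_idem[of t]] by simp
  also have "\<dots> = sinv t * t * g"
    using g(1) unfolding idems_def by (simp add: mult.assoc)
  finally have "t * (sinv x * x) = (t * sinv t * t) * g"
    by (simp add: mult.assoc)
  then show ?thesis
    using g sinv(1)[of t] by simp
qed

lemma idem_below_absorb: "(e::'a) \<in> idems \<Longrightarrow> nat_le e s \<Longrightarrow> s * e = e"
  using nat_le_imp_eq_mult_domain[of e s] sinv_idem[of e] by (simp add: idems_def)

text \<open>With \<open>u = zg\<close>: \<open>gs = s(s\<^sup>-\<^sup>1gs)\<close> because \<open>g\<close> commutes with \<open>ss\<^sup>-\<^sup>1\<close>, and \<open>s\<^sup>-\<^sup>1gs\<close> is idempotent.\<close>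
lemma nat_le_mult_right:
  assumes "nat_le (u::'a) z"
  shows "nat_le (u * s) (z * s)"
proof -
  obtain g where g: "g \<in> idems" "u = z * g"
    using assms unfolding nat_le_def by auto
  define f where "f = sinv s * g * s"
  have comm: "(s * sinv s) * g = g * (s * sinv s)"
    using idems_commute[OF mult_sinv_idem g(1)] .
  have "s * f = (s * sinv s * g) * s"
    by (simp add: f_def mult.assoc)
  also have "\<dots> = g * (s * sinv s) * s"
    using comm by simp
  also have "\<dots> = g * (s * sinv s * s)"
    by (simp add: mult.assoc)
  finally have sf: "s * f = g * s"
    using sinv(1)[of s] by simp
  have "f * f = sinv s * (g * (s * sinv s)) * g * s"
    by (simp add: f_def mult.assoc)
  also have "\<dots> = sinv s * ((s * sinv s) * g) * g * s"
    using comm by simp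
  also have "\<dots> = (sinv s * s * sinv s) * (g * g) * s"
    by (simp add: mult.assoc)
  finally have "f * f = f"
    using sinv(2)[of s] g(1) unfolding f_def idems_def by simp
  then show ?thesis
    unfolding nat_le_def idems_def using g sf
    by (intro bexI[of _ f]) (simp_all add: mult.assoc)
qed

end

lemma (in inverse_semigroup_type) way_below_idems_imp_way_below:
  assumes cont: "sep_scott_continuous TYPE('a)"
    and d: "(d::'a) \<in> idems"
    and wb: "way_below nat_le idems e d"
  shows "way_below nat_le UNIV e d"
  unfolding way_below_def
proof (intro allI impI, elim conjE)
  fix D :: "'a set" and s
  assume dir: "directed nat_le D" and sup: "is_sup nat_le UNIV D s" and ds: "nat_le d s"
  let ?Dd = "(\<lambda>x. x * d) ` D"
  have sd: "s * d = d"
    using idem_below_absorb[OF d ds] .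
  have "is_sup nat_le UNIV ?Dd d"
    using cont dir sup sd unfolding sep_scott_continuous_def by metis
  then have sup_d: "is_sup nat_le idems ?Dd d"
    using d by (rule is_sup_subset) simp
  have "?Dd \<subseteq> idems"
  proof
    fix y assume "y \<in> ?Dd"
    then obtain x where "x \<in> D" "y = x * d" by auto
    moreover have "nat_le x s" using \<open>x \<in> D\<close> sup unfolding is_sup_def is_ub_def by auto
    ultimately have "nat_le y d" using nat_le_mult_right[of x s d] sd by simp
    then show "y \<in> idems" using nat_le_idems d by blast
  qed
  moreover have "directed nat_le ?Dd"
    using dir nat_le_mult_right by (rule directed_image_mono)
  ultimately obtain x where "x \<in> D" "nat_le e (x * d)"
    using wb sup_d nat_le_refl[of d] unfolding way_below_def by blast
  then show "\<exists>x\<in>D. nat_le e x"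
    using nat_le_mult_idem[OF d] nat_le_trans by blast
qed

lemma (in inverse_semigroup_type) way_below_imp_way_below_idems:
  assumes mirror: "mirror_semigroup TYPE('a)"
    and wb: "way_below nat_le UNIV e (d::'a)"
  shows "way_below nat_le idems e d"
  unfolding way_below_def
proof (intro allI impI, elim conjE)
  fix D :: "'a set" and s
  assume D: "D \<subseteq> idems" and dir: "directed nat_le D"
    and sup: "is_sup nat_le idems D s" and ds: "nat_le d s"
  obtain y where y: "is_sup nat_le UNIV D y"
    using mirror D dir sup unfolding mirror_semigroup_def by blast
  have "s \<in> idems" and ys: "nat_le y s"
    using sup y unfolding is_sup_def is_ub_def by auto
  then have "y \<in> idems"
    using nat_le_idems by blast
  then have "nat_le s y"
    using sup y unfolding is_sup_def is_ub_def by auto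
  then have "y = s"
    using nat_le_antisym[OF ys] by blast
  then show "\<exists>x\<in>D. nat_le e x"
    using wb dir y ds unfolding way_below_def by blast
qed

theorem corollary4p5:
  assumes "inverse_semigroup TYPE('a::semigroup_mult)"
    and "mirror_semigroup TYPE('a)"
    and "sep_scott_continuous TYPE('a)"
    and "e \<in> (idems :: 'a set)" and "d \<in> idems"
  shows "way_below nat_le idems e d \<longleftrightarrow> way_below nat_le (UNIV :: 'a set) e d"
proof -
  interpret inverse_semigroup_type "TYPE('a)"
    using assms(1) by unfold_locales
  show ?thesis
    using way_below_idems_imp_way_below[OF assms(3) assms(5)]
      way_below_imp_way_below_idems[OF assms(2)] by blast
qed

end
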